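(* $P(2,3)=3$, and $P(2^k,3)=6$ for every integer $k>1$.
   Context: For positive integers $m,n$, let $\mathbf{Z}_m$ be the integers modulo $m$ and $T:\mathbf{Z}_m^n\to\mathbf{Z}_m^n$, $T(a_0,\dots,a_{n-1})=(a_0+a_1,a_1+a_2,\dots,a_{n-1}+a_0)$. For $\mathbf{a}\in\mathbf{Z}_m^n$ the cycle length of $(T^k\mathbf{a})_{k\ge0}$ is the smallest positive integer $P$ such that there is $N$ with $T^{k+P}\mathbf{a}=T^k\mathbf{a}$ for all $k\ge N$. $P(m,n)$ denotes the maximum of these cycle lengths over all $\mathbf{a}\in\mathbf{Z}_m^n$. *)

theory Defs
  imports Main
begin

text \<open>Elements of Z_m^n are represented as functions a :: nat => nat with
  a i < m for i < n (the residues 0..m-1) and a i = 0 for i >= n.\<close>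

definition vecs :: "nat \<Rightarrow> nat \<Rightarrow> (nat \<Rightarrow> nat) set" where
  "vecs m n = {a. (\<forall>i<n. a i < m) \<and> (\<forall>i\<ge>n. a i = 0)}"

definition T :: "nat \<Rightarrow> nat \<Rightarrow> (nat \<Rightarrow> nat) \<Rightarrow> (nat \<Rightarrow> nat)" where
  "T m n a = (\<lambda>i. if i < n then (a i + a ((i + 1) mod n)) mod m else 0)"

definition cycle_len :: "nat \<Rightarrow> nat \<Rightarrow> (nat \<Rightarrow> nat) \<Rightarrow> nat" where
  "cycle_len m n a = (LEAST p. 0 < p \<and> (\<exists>N. \<forall>k\<ge>N. (T m n ^^ (k + p)) a = (T m n ^^ k) a))"

definition Pmax :: "nat \<Rightarrow> nat \<Rightarrow> nat" where
  "Pmax m n = Max (cycle_len m n ` vecs m n)"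

end

theory Submission
  imports Defs
begin

text \<open>Work with the unreduced map U = T_nat 3 on nat^3, U (a0, a1, a2) = (a0 + a1, a1 + a2, a2 + a0),
  so that T^j a is U^j a reduced modulo m. The entry sum s of a doubles under U, and
  U^3 a + a = 3 s componentwise; applied twice this gives U^(j+6) a = U^j a + 21 * 2^j * s,
  and also U^(j+3) a + U^j a = 3 * 2^j * s. Hence every orbit is eventually 6-periodic
  modulo 2^k and eventually 3-periodic modulo 2. The orbit of (1,0,0) attains these periods:
  its first terms show that no shorter shift fixes it modulo 4 (resp. modulo 2), and
  periodicity modulo m passes to any divisor of m.\<close>

definition T_nat :: "nat \<Rightarrow> (nat \<Rightarrow> nat) \<Rightarrow> nat \<Rightarrow> nat" where
  "T_nat n a = (\<lambda>i. if i < n then a i + a ((i + 1) mod n) else 0)"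

lemma funpow_T_eq_mod:
  assumes "a \<in> vecs m n"
  shows "(T m n ^^ j) a = (\<lambda>i. if i < n then (T_nat n ^^ j) a i mod m else 0)"
proof (induction j)
  case 0
  show ?case using assms by (auto simp: vecs_def)
next
  case (Suc j)
  have "(T m n ^^ Suc j) a = T m n (\<lambda>i. if i < n then (T_nat n ^^ j) a i mod m else 0)"
    using Suc.IH by simp
  also have "\<dots> = (\<lambda>i. if i < n then (T_nat n ^^ Suc j) a i mod m else 0)"
    by (rule ext) (simp add: T_def T_nat_def mod_add_eq)
  finally show ?case .
qed

lemma T_nat3_simps:
  "T_nat 3 a 0 = a 0 + a (Suc 0)" "T_nat 3 a (Suc 0) = a (Suc 0) + a 2" "T_nat 3 a 2 = a 2 + a 0"
  by (simp_all add: T_nat_def numeral_2_eq_2)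

lemma sum_funpow_T_nat3:
  "(T_nat 3 ^^ j) a 0 + (T_nat 3 ^^ j) a 1 + (T_nat 3 ^^ j) a 2 = 2 ^ j * (a 0 + a 1 + a 2)"
  by (induction j) (auto simp: T_nat3_simps)

lemma funpow3_T_nat3_add:
  assumes "i < 3"
  shows "(T_nat 3 ^^ 3) a i + a i = 3 * (a 0 + a 1 + a 2)"
proof -
  have "(T_nat 3 ^^ 3) a = T_nat 3 (T_nat 3 (T_nat 3 a))"
    by (simp add: numeral_3_eq_3)
  moreover have "i = 0 \<or> i = Suc 0 \<or> i = 2" using assms by auto
  ultimately show ?thesis by (auto simp: T_nat3_simps)
qed

lemma funpow_T_nat3_shift3:
  assumes "i < 3"
  shows "(T_nat 3 ^^ (j + 3)) a i + (T_nat 3 ^^ j) a i = 3 * 2 ^ j * (a 0 + a 1 + a 2)"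
proof -
  have "(T_nat 3 ^^ (j + 3)) a = (T_nat 3 ^^ 3) ((T_nat 3 ^^ j) a)"
    by (metis add.commute comp_apply funpow_add)
  then show ?thesis
    using funpow3_T_nat3_add[OF assms, of "(T_nat 3 ^^ j) a"]
    by (simp only: sum_funpow_T_nat3 mult.assoc)
qed

lemma funpow_T_nat3_shift6:
  assumes "i < 3"
  shows "(T_nat 3 ^^ (j + 6)) a i = (T_nat 3 ^^ j) a i + 21 * 2 ^ j * (a 0 + a 1 + a 2)"
  using funpow_T_nat3_shift3[OF assms, of j a] funpow_T_nat3_shift3[OF assms, of "j + 3" a]
  by (simp add: add.assoc power_add)

lemma funpow_T_nat3_periodic_mod_pow2:
  assumes "i < 3" "k \<le> j"
  shows "(T_nat 3 ^^ (j + 6)) a i mod 2 ^ k = (T_nat 3 ^^ j) a i mod 2 ^ k"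
proof -
  obtain t where t: "2 ^ j = 2 ^ k * (t::nat)" using assms(2) by (metis le_imp_power_dvd dvdE)
  have "(T_nat 3 ^^ (j + 6)) a i = (T_nat 3 ^^ j) a i + 2 ^ k * (21 * t * (a 0 + a 1 + a 2))"
    by (simp add: funpow_T_nat3_shift6[OF assms(1)] t)
  then show ?thesis by simp
qed

lemma funpow_T_nat3_periodic_mod2:
  assumes "i < 3" "1 \<le> j"
  shows "(T_nat 3 ^^ (j + 3)) a i mod 2 = (T_nat 3 ^^ j) a i mod 2"
proof -
  have "even ((T_nat 3 ^^ (j + 3)) a i + (T_nat 3 ^^ j) a i)"
    using assms(2) by (simp add: funpow_T_nat3_shift3[OF assms(1)])
  then show ?thesis by (simp add: mod2_eq_if)
qed

lemma periodic_from_eventually_periodic: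
  fixes f :: "nat \<Rightarrow> 'a"
  assumes "0 < q" and periodic: "\<forall>j\<ge>N0. f (j + q) = f j"
    and "\<forall>\<^sub>F j in sequentially. f (j + p) = f j"
  shows "f (N0 + p) = f N0"
proof -
  have shift: "f (j + q * N) = f j" if "j \<ge> N0" for j N
  proof (induction N)
    case (Suc N)
    have "f (j + q * Suc N) = f (j + q * N + q)" by (simp add: algebra_simps)
    also have "\<dots> = f (j + q * N)" using periodic that by simp
    finally show ?case using Suc.IH by simp
  qed simp
  obtain M where M: "\<forall>j\<ge>M. f (j + p) = f j"
    using assms(3) by (auto simp: eventually_sequentially)
  have "M \<le> N0 + q * M" using \<open>0 < q\<close> by (cases q) auto
  then have "f (N0 + p) = f (N0 + q * M + p)"
    using shift[of "N0 + p" M] by (simp add: algebra_simps)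
  also have "\<dots> = f (N0 + q * M)" using M \<open>M \<le> N0 + q * M\<close> by blast
  also have "\<dots> = f N0" using shift by simp
  finally show ?thesis .
qed

lemma orbit_eventually_periodicI:
  assumes "a \<in> vecs m n"
    and "\<And>i j. i < n \<Longrightarrow> N \<le> j \<Longrightarrow> (T_nat n ^^ (j + q)) a i mod m = (T_nat n ^^ j) a i mod m"
  shows "\<forall>\<^sub>F j in sequentially. (T m n ^^ (j + q)) a = (T m n ^^ j) a"
proof -
  have "(T m n ^^ (j + q)) a = (T m n ^^ j) a" if "N \<le> j" for j
    using assms(2)[OF _ that] by (auto simp: funpow_T_eq_mod[OF assms(1)] fun_eq_iff)
  then show ?thesis by (auto simp: eventually_sequentially)
qed

lemma orbit_not_eventually_periodicI:
  assumes "a \<in> vecs m n" "i < n" "d dvd m" "0 < q"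
    and "\<forall>j\<ge>N0. (T_nat n ^^ (j + q)) a i mod d = (T_nat n ^^ j) a i mod d"
    and "(T_nat n ^^ (N0 + p)) a i mod d \<noteq> (T_nat n ^^ N0) a i mod d"
  shows "\<not> (\<forall>\<^sub>F j in sequentially. (T m n ^^ (j + p)) a = (T m n ^^ j) a)"
proof
  assume "\<forall>\<^sub>F j in sequentially. (T m n ^^ (j + p)) a = (T m n ^^ j) a"
  then have "\<forall>\<^sub>F j in sequentially.
      (T_nat n ^^ (j + p)) a i mod d = (T_nat n ^^ j) a i mod d"
  proof (rule eventually_mono)
    fix j assume "(T m n ^^ (j + p)) a = (T m n ^^ j) a"
    then have "(T m n ^^ (j + p)) a i = (T m n ^^ j) a i" by simp
    then have "(T_nat n ^^ (j + p)) a i mod m = (T_nat n ^^ j) a i mod m"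
      using \<open>i < n\<close> by (simp add: funpow_T_eq_mod[OF assms(1)])
    then have "(T_nat n ^^ (j + p)) a i mod m mod d = (T_nat n ^^ j) a i mod m mod d"
      by simp
    then show "(T_nat n ^^ (j + p)) a i mod d = (T_nat n ^^ j) a i mod d"
      by (simp add: mod_mod_cancel[OF \<open>d dvd m\<close>])
  qed
  then have "(T_nat n ^^ (N0 + p)) a i mod d = (T_nat n ^^ N0) a i mod d"
    by (rule periodic_from_eventually_periodic[where f = "\<lambda>j. (T_nat n ^^ j) a i mod d",
          OF \<open>0 < q\<close> assms(5)])
  with assms(6) show False by contradiction
qed

lemma orbit_mod_pow2_eventually_periodic:
  assumes "a \<in> vecs (2 ^ k) 3"
  shows "\<forall>\<^sub>F j in sequentially. (T (2 ^ k) 3 ^^ (j + 6)) a = (T (2 ^ k) 3 ^^ j) a"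
  using assms funpow_T_nat3_periodic_mod_pow2 by (rule orbit_eventually_periodicI)

lemma orbit_mod2_eventually_periodic:
  assumes "a \<in> vecs 2 3"
  shows "\<forall>\<^sub>F j in sequentially. (T 2 3 ^^ (j + 3)) a = (T 2 3 ^^ j) a"
  using assms funpow_T_nat3_periodic_mod2 by (rule orbit_eventually_periodicI)

lemma cycle_len_le:
  assumes "0 < p" "\<forall>\<^sub>F j in sequentially. (T m n ^^ (j + p)) a = (T m n ^^ j) a"
  shows "cycle_len m n a \<le> p"
proof -
  obtain N where "\<forall>k\<ge>N. (T m n ^^ (k + p)) a = (T m n ^^ k) a"
    using assms(2) by (auto simp: eventually_sequentially)
  then show ?thesis unfolding cycle_len_def using \<open>0 < p\<close> by (intro Least_le) blast
qed

lemma cycle_len_eqI: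
  assumes "0 < q" "\<forall>\<^sub>F j in sequentially. (T m n ^^ (j + q)) a = (T m n ^^ j) a"
    and "\<And>p. 0 < p \<Longrightarrow> p < q \<Longrightarrow>
      \<not> (\<forall>\<^sub>F j in sequentially. (T m n ^^ (j + p)) a = (T m n ^^ j) a)"
  shows "cycle_len m n a = q"
  unfolding cycle_len_def
proof (rule Least_equality)
  show "0 < q \<and> (\<exists>N. \<forall>k\<ge>N. (T m n ^^ (k + q)) a = (T m n ^^ k) a)"
    using assms(1,2) by (simp add: eventually_sequentially)
  show "q \<le> p" if "0 < p \<and> (\<exists>N. \<forall>k\<ge>N. (T m n ^^ (k + p)) a = (T m n ^^ k) a)" for p
  proof (rule ccontr)
    assume "\<not> q \<le> p"
    then have "\<not> (\<forall>\<^sub>F j in sequentially. (T m n ^^ (j + p)) a = (T m n ^^ j) a)"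
      using assms(3) that by simp
    with that show False by (auto simp: eventually_sequentially)
  qed
qed

lemma cycle_len_eqI_mod_divisor:
  assumes "a \<in> vecs m n" "d dvd m" "0 < q"
    and "\<forall>\<^sub>F j in sequentially. (T m n ^^ (j + q)) a = (T m n ^^ j) a"
    and "\<And>i j. i < n \<Longrightarrow> N0 \<le> j \<Longrightarrow> (T_nat n ^^ (j + q)) a i mod d = (T_nat n ^^ j) a i mod d"
    and "\<And>p. 0 < p \<Longrightarrow> p < q \<Longrightarrow>
      \<exists>i<n. (T_nat n ^^ (N0 + p)) a i mod d \<noteq> (T_nat n ^^ N0) a i mod d"
  shows "cycle_len m n a = q"
proof (rule cycle_len_eqI[OF assms(3,4)])
  fix p assume "0 < p" "p < q"
  then obtain i where "i < n" "(T_nat n ^^ (N0 + p)) a i mod d \<noteq> (T_nat n ^^ N0) a i mod d"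
    using assms(6) by blast
  then show "\<not> (\<forall>\<^sub>F j in sequentially. (T m n ^^ (j + p)) a = (T m n ^^ j) a)"
    using assms(5) by (intro orbit_not_eventually_periodicI[OF assms(1) _ assms(2,3)]) auto
qed

lemma finite_vecs: "finite (vecs m n)"
proof (rule finite_subset)
  show "vecs m n \<subseteq> {f. \<forall>x. (x \<in> {..<n} \<longrightarrow> f x \<in> {..<m}) \<and> (x \<notin> {..<n} \<longrightarrow> f x = 0)}"
    by (auto simp: vecs_def)
  show "finite {f. \<forall>x. (x \<in> {..<n} \<longrightarrow> f x \<in> {..<m}) \<and> (x \<notin> {..<n} \<longrightarrow> (f x :: nat) = 0)}"
    by (rule finite_set_of_finite_funs) auto
qed

lemma Pmax_eqI:
  assumes "\<And>a. a \<in> vecs m n \<Longrightarrow> cycle_len m n a \<le> q" "b \<in> vecs m n" "cycle_len m n b = q"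
  shows "Pmax m n = q"
  unfolding Pmax_def
proof (rule Max_eqI)
  show "finite (cycle_len m n ` vecs m n)" by (simp add: finite_vecs)
  show "p \<le> q" if "p \<in> cycle_len m n ` vecs m n" for p using that assms(1) by blast
  show "q \<in> cycle_len m n ` vecs m n" using assms(2,3) by blast
qed

definition e0 :: "nat \<Rightarrow> nat" where
  "e0 = (\<lambda>_. 0)(0 := 1)"

lemma e0_in_vecs: "1 < m \<Longrightarrow> 0 < n \<Longrightarrow> e0 \<in> vecs m n"
  by (auto simp: vecs_def e0_def)

lemma funpow_numeral: "f ^^ numeral k = f \<circ> f ^^ pred_numeral k"
  by (simp add: numeral_eq_Suc)

text \<open>The orbit of e0 under T_nat 3 begins (1,0,0), (1,0,1), (1,1,2), (2,3,3), (5,6,5),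
  (11,11,10), (22,21,21), (43,42,43).\<close>

lemma funpow_T_nat3_e0_shift_mod4:
  assumes "0 < p" "p < 6"
  shows "\<exists>i<3. (T_nat 3 ^^ (2 + p)) e0 i mod 4 \<noteq> (T_nat 3 ^^ 2) e0 i mod 4"
proof (cases "p = 2")
  case True
  then show ?thesis by (intro exI[of _ 2]) (simp add: funpow_numeral T_nat3_simps e0_def)
next
  case False
  then have "p = 1 \<or> p = 3 \<or> p = 4 \<or> p = 5" using assms by auto
  then show ?thesis by (intro exI[of _ 0]) (auto simp: funpow_numeral T_nat3_simps e0_def)
qed

lemma funpow_T_nat3_e0_shift_mod2:
  assumes "0 < p" "p < 3"
  shows "\<exists>i<3. (T_nat 3 ^^ (1 + p)) e0 i mod 2 \<noteq> (T_nat 3 ^^ 1) e0 i mod 2"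
proof (cases "p = 1")
  case True
  then show ?thesis by (intro exI[of _ 2]) (simp add: funpow_numeral T_nat3_simps e0_def)
next
  case False
  then have "p = 2" using assms by auto
  then show ?thesis by (intro exI[of _ 0]) (simp add: funpow_numeral T_nat3_simps e0_def)
qed

theorem proposition5p2:
  shows "Pmax 2 3 = 3 \<and> (\<forall>k::nat. k > 1 \<longrightarrow> Pmax (2 ^ k) 3 = 6)"
proof
  have e0: "e0 \<in> vecs 2 3" by (simp add: e0_in_vecs)
  have bound: "cycle_len 2 3 a \<le> 3" if "a \<in> vecs 2 3" for a
    using orbit_mod2_eventually_periodic[OF that] by (rule cycle_len_le[rotated]) simp
  have cycle: "cycle_len 2 3 e0 = 3"
    by (rule cycle_len_eqI_mod_divisor[OF e0 dvd_refl _ orbit_mod2_eventually_periodic[OF e0]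
          funpow_T_nat3_periodic_mod2 funpow_T_nat3_e0_shift_mod2]) simp
  show "Pmax 2 3 = 3" by (rule Pmax_eqI[OF bound e0 cycle])
  show "\<forall>k::nat. k > 1 \<longrightarrow> Pmax (2 ^ k) 3 = 6"
  proof (intro allI impI)
    fix k :: nat assume "k > 1"
    then have "(1::nat) < 2 ^ k" using one_less_power[of "2::nat" k] by linarith
    then have e0: "e0 \<in> vecs (2 ^ k) 3" by (simp add: e0_in_vecs)
    have bound: "cycle_len (2 ^ k) 3 a \<le> 6" if "a \<in> vecs (2 ^ k) 3" for a
      using orbit_mod_pow2_eventually_periodic[OF that] by (rule cycle_len_le[rotated]) simp
    have dvd: "(4::nat) dvd 2 ^ k" using le_imp_power_dvd[of 2 k "2::nat"] \<open>k > 1\<close> by simp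
    have periodic_mod4: "(T_nat 3 ^^ (j + 6)) a i mod 4 = (T_nat 3 ^^ j) a i mod 4"
      if "i < 3" "2 \<le> j" for a i j
      using funpow_T_nat3_periodic_mod_pow2[OF that] by simp
    have cycle: "cycle_len (2 ^ k) 3 e0 = 6"
      by (rule cycle_len_eqI_mod_divisor[OF e0 dvd _ orbit_mod_pow2_eventually_periodic[OF e0]
            periodic_mod4 funpow_T_nat3_e0_shift_mod4]) simp
    show "Pmax (2 ^ k) 3 = 6" by (rule Pmax_eqI[OF bound e0 cycle])
  qed
qed

end
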